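(* Let $n=2k$ with $k\ge1$, let $\lambda\in\mathbb{F}_{2^n}$ and $f(x)=Tr(\lambda x^{2^k+1})$ for $x\in\mathbb{F}_{2^n}$. Then $f$ is negabent if and only if $\lambda+\lambda^{2^k}\neq 1$. Moreover, $f$ is bent-negabent if and only if $\lambda+\lambda^{2^k}\notin\mathbb{F}_2$.
   Context: $Tr=Tr_1^n$ is the absolute trace $\mathbb{F}_{2^n}\to\mathbb{F}_2$. Fix a self-dual basis of $\mathbb{F}_{2^n}$ over $\mathbb{F}_2$ (basis $\{\alpha_i\}$ with $Tr(\alpha_i\alpha_j)=\delta_{ij}$), identify $\mathbb{F}_{2^n}$ with $\mathbb{F}_2^n$ via coordinates, and let $wt(x)$ be the number of nonzero coordinates of $x$. For $g:\mathbb{F}_{2^n}\to\mathbb{F}_2$: $g$ is bent if $\left|\sum_x(-1)^{g(x)+Tr(\mu x)}\right|=2^{n/2}$ for all $\mu$; $g$ is negabent if $\left|\sum_x(-1)^{g(x)+Tr(\mu x)}\mathrm{i}^{wt(x)}\right|=2^{n/2}$ for all $\mu$ ($\mathrm{i}=\sqrt{-1}$); bent-negabent means both. *)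

theory Defs
  imports Complex_Main
begin

text \<open>The finite field F_(2^n) is modelled as an arbitrary finite field type 'a
  with CARD('a) = 2^n (hence characteristic 2).  F_2 is the prime subfield {0,1}.\<close>

definition tr :: "nat \<Rightarrow> 'a::field \<Rightarrow> 'a" where
  "tr n x = (\<Sum>i<n. x ^ (2 ^ i))"

definition sgn2 :: "'a::field \<Rightarrow> complex" where
  "sgn2 y = (if y = 0 then 1 else -1)"

definition self_dual_basis :: "nat \<Rightarrow> (nat \<Rightarrow> 'a::field) \<Rightarrow> bool" where
  "self_dual_basis n \<alpha> \<longleftrightarrow>
     (\<forall>i<n. \<forall>j<n. tr n (\<alpha> i * \<alpha> j) = (if i = j then 1 else 0))"

text \<open>Coordinates of x w.r.t. a self-dual basis are tr n (alpha i * x); wt counts the nonzero ones.\<close>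
definition wt :: "nat \<Rightarrow> (nat \<Rightarrow> 'a::field) \<Rightarrow> 'a \<Rightarrow> nat" where
  "wt n \<alpha> x = card {i. i < n \<and> tr n (\<alpha> i * x) \<noteq> 0}"

definition bent :: "nat \<Rightarrow> ('a::{field,finite} \<Rightarrow> 'a) \<Rightarrow> bool" where
  "bent n g \<longleftrightarrow>
     (\<forall>\<mu>. cmod (\<Sum>x\<in>UNIV. sgn2 (g x + tr n (\<mu> * x))) = 2 powr (real n / 2))"

definition negabent :: "nat \<Rightarrow> (nat \<Rightarrow> 'a::{field,finite}) \<Rightarrow> ('a \<Rightarrow> 'a) \<Rightarrow> bool" where
  "negabent n \<alpha> g \<longleftrightarrow>
     (\<forall>\<mu>. cmod (\<Sum>x\<in>UNIV. sgn2 (g x + tr n (\<mu> * x)) * \<i> ^ wt n \<alpha> x) = 2 powr (real n / 2))"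

end

theory Submission
  imports Defs "HOL-Number_Theory.Residues"
begin

(* Write q = 2^k and c = lam + lam^q, which lies in the subfield F_(2^k).  For f x = Tr (lam x^(q+1))
   the polar form Tr (lam (a+y)^(q+1)) - Tr (lam a^(q+1)) - Tr (lam y^(q+1)) = Tr (y c a^q) is linear
   in y, so squaring a Walsh coefficient and summing out y leaves 2^n times a sum over the kernel of
   a |-> c a^q.  In the nega-Hadamard transform the weights add one more linear term: coordinates in
   a self-dual basis are traces, so i^wt(x) * conj (i^wt(y)) = i^wt(x+y) * (-1)^Tr(x y + y), and the
   kernel becomes that of a |-> c a^q + a.  Since c^q = c, a nonzero root forces c^2 = 1, i.e. c = 1.
   Hence the nega-spectrum is flat iff c <> 1; for c = 1, Fourier inversion at the root 1 shows it is
   not.  Likewise f is bent iff c <> 0, and for c = 0 the function f vanishes identically. *)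

(* The library's finite_field_power_card_eq_same requires the sort finite_field. *)
lemma power_card_eq_self:
  fixes x :: "'a::{field,finite}"
  shows "x ^ card (UNIV :: 'a set) = x"
proof (cases "x = 0")
  case False
  let ?U = "UNIV - {0 :: 'a}"
  have "x ^ card ?U * (\<Prod>y\<in>?U. y) = (\<Prod>y\<in>?U. x * y)"
    by (simp add: prod.distrib)
  also have "\<dots> = (\<Prod>y\<in>?U. y)"
    by (rule prod.reindex_bij_witness[of _ "\<lambda>y. y / x" "\<lambda>y. x * y"]) (use False in auto)
  finally have "x ^ card ?U = 1"
    by simp
  moreover have "card (UNIV :: 'a set) = Suc (card ?U)"
    by (simp add: card_Diff_singleton finite_UNIV_card_ge_0)
  ultimately show ?thesis
    by (simp only: power_Suc mult_1_right)
qed (simp add: finite_UNIV_card_ge_0)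

lemma cmod_eq_two_powr_half_iff:
  "cmod z = 2 powr (real n / 2) \<longleftrightarrow> z * cnj z = 2 ^ n"
proof -
  have "(2 powr (real n / 2)) ^ 2 = (2::real) ^ n"
    by (simp add: powr_power powr_realpow)
  then have "cmod z = 2 powr (real n / 2) \<longleftrightarrow> (cmod z) ^ 2 = 2 ^ n"
    using power2_eq_iff_nonneg[of "cmod z" "2 powr (real n / 2)"] by simp
  also have "\<dots> \<longleftrightarrow> complex_of_real ((cmod z) ^ 2) = 2 ^ n"
    by (simp only: of_real_eq_iff[symmetric, where 'a=complex]) simp
  finally show ?thesis
    by (simp only: complex_norm_square)
qed

lemma i_power_card_mult_cnj:
  assumes "finite A" "finite B"
  shows "\<i> ^ card A * cnj (\<i> ^ card B)
           = \<i> ^ card (A - B \<union> (B - A)) * (-1) ^ (card (A \<inter> B) + card B)"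
proof -
  define a b c where "a = card (A - B)" and "b = card (B - A)" and "c = card (A \<inter> B)"
  have card_A: "card A = a + c" and card_B: "card B = b + c"
    using card_Int_Diff[OF assms(1), of B] card_Int_Diff[OF assms(2), of A]
    by (simp_all add: a_def b_def c_def Int_commute)
  have card_sym_diff: "card (A - B \<union> (B - A)) = a + b"
    unfolding a_def b_def using assms by (intro card_Un_disjoint) auto
  have i_square: "\<i> ^ c * \<i> ^ c = (-1::complex) ^ c"
    by (simp flip: power_mult_distrib)
  have "\<i> ^ card A * cnj (\<i> ^ card B) = \<i> ^ (a + c) * (- \<i>) ^ (b + c)"
    by (simp add: card_A card_B)
  also have "\<dots> = \<i> ^ (a + b) * (\<i> ^ c * \<i> ^ c) * (-1) ^ (b + c)"
    by (simp only: power_minus[of \<i>] power_add mult_ac)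
  also have "\<dots> = \<i> ^ card (A - B \<union> (B - A)) * (-1) ^ (card (A \<inter> B) + card B)"
    unfolding i_square card_sym_diff card_B c_def[symmetric] by (simp add: power_add)
  finally show ?thesis .
qed

definition trace_char :: "nat \<Rightarrow> 'a::field \<Rightarrow> complex" where
  "trace_char n x = sgn2 (tr n x)"

lemma cnj_trace_char [simp]: "cnj (trace_char n x) = trace_char n x"
  by (simp add: trace_char_def sgn2_def)

lemma trace_char_mult_self_left [simp]: "trace_char n x * (trace_char n x * z) = z"
  by (simp add: trace_char_def sgn2_def)

definition walsh :: "nat \<Rightarrow> ('a::{field,finite} \<Rightarrow> 'a) \<Rightarrow> 'a \<Rightarrow> complex" where
  "walsh n g \<mu> = (\<Sum>x\<in>UNIV. sgn2 (g x + tr n (\<mu> * x)))"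

definition nega_walsh :: "nat \<Rightarrow> (nat \<Rightarrow> 'a) \<Rightarrow> ('a::{field,finite} \<Rightarrow> 'a) \<Rightarrow> 'a \<Rightarrow> complex" where
  "nega_walsh n \<alpha> g \<mu> = (\<Sum>x\<in>UNIV. sgn2 (g x + tr n (\<mu> * x)) * \<i> ^ wt n \<alpha> x)"

lemma bent_iff_walsh_square:
  "bent n g \<longleftrightarrow> (\<forall>\<mu>. walsh n g \<mu> * cnj (walsh n g \<mu>) = 2 ^ n)"
  by (simp add: bent_def walsh_def cmod_eq_two_powr_half_iff)

lemma negabent_iff_nega_walsh_square:
  "negabent n \<alpha> g \<longleftrightarrow> (\<forall>\<mu>. nega_walsh n \<alpha> g \<mu> * cnj (nega_walsh n \<alpha> g \<mu>) = 2 ^ n)"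
  by (simp add: negabent_def nega_walsh_def cmod_eq_two_powr_half_iff)

(* The parameter F only serves to fix the field type 'a. *)
locale binary_field =
  fixes F :: "'a::{field,finite} itself" and n :: nat
  assumes card_eq: "card (UNIV :: 'a set) = 2 ^ n"
begin

lemma CHAR_eq_2: "CHAR('a) = 2"
proof -
  have "prime CHAR('a)"
    by (rule prime_CHAR_semidom) (simp add: finite_imp_CHAR_pos)
  moreover have "CHAR('a) dvd 2 ^ n"
    using CHAR_dvd_CARD[where 'a='a] card_eq by simp
  ultimately show ?thesis
    by (metis prime_dvd_power primes_dvd_imp_eq two_is_prime_nat)
qed

lemma two_eq_zero [simp]: "(2::'a) = 0"
  using of_nat_CHAR[where 'a='a] by (simp add: CHAR_eq_2)

lemma minus_eq_self [simp]: "- (x::'a) = x"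
  by (rule uminus_CHAR_2[OF CHAR_eq_2])

lemma add_eq_0_iff_eq: "(x::'a) + y = 0 \<longleftrightarrow> x = y"
  by (metis add_eq_0_iff minus_eq_self)

lemma add_self [simp]: "(x::'a) + x = 0"
  by (simp add: add_eq_0_iff_eq)

lemma n_pos: "0 < n"
proof -
  have "card {0::'a, 1} \<le> card (UNIV :: 'a set)"
    by (rule card_mono) simp_all
  then show ?thesis
    using card_eq by (cases n) simp_all
qed

lemma power_two_power_add: "((x::'a) + y) ^ 2 ^ i = x ^ 2 ^ i + y ^ 2 ^ i"
  by (rule freshmans_dream') (simp_all add: CHAR_eq_2)

lemma power_two_power_n [simp]: "(x::'a) ^ 2 ^ n = x"
  using power_card_eq_self[of x] by (simp add: card_eq)

lemma sgn2_of_nat: "sgn2 (of_nat m :: 'a) = (-1) ^ m"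
proof -
  have "(of_nat m :: 'a) = (if even m then 0 else 1)"
    by (induction m) auto
  then show ?thesis
    by (simp add: sgn2_def)
qed

lemma tr_add: "tr n (x + y) = tr n x + tr n (y::'a)"
  by (simp add: tr_def power_two_power_add sum.distrib)

lemma tr_zero [simp]: "tr n (0::'a) = 0"
  by (simp add: tr_def zero_power)

lemma tr_sum: "tr n (\<Sum>i\<in>A. f i :: 'a) = (\<Sum>i\<in>A. tr n (f i))"
  by (induction A rule: infinite_finite_induct) (simp_all add: tr_add)

lemma tr_square: "tr n ((x::'a) ^ 2) = tr n x"
proof -
  define f where "f i = x ^ 2 ^ i" for i
  have "f 0 + (\<Sum>i<n. f (Suc i)) = (\<Sum>i<n. f i) + f n"
    by (metis sum.lessThan_Suc sum.lessThan_Suc_shift)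
  moreover have "f n = f 0"
    by (simp add: f_def)
  ultimately have "(\<Sum>i<n. f (Suc i)) = (\<Sum>i<n. f i)"
    by (simp add: add.commute)
  then show ?thesis
    by (simp add: tr_def f_def mult.commute flip: power_mult)
qed

lemma tr_power_two: "tr n ((x::'a) ^ 2 ^ j) = tr n x"
proof (induction j)
  case (Suc j)
  then show ?case
    using tr_square[of "x ^ 2 ^ j"] by (simp add: mult.commute flip: power_mult)
qed simp

lemma tr_eq_0_or_1: "tr n (x::'a) = 0 \<or> tr n x = 1"
proof -
  have "(tr n x) ^ 2 = tr n (x ^ 2)"
    unfolding tr_def by (simp add: freshmans_dream_sum CHAR_eq_2 mult.commute flip: power_mult)
  then have "tr n x * (tr n x - 1) = 0"
    by (simp add: tr_square right_diff_distrib flip: power2_eq_square)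
  then show ?thesis
    by simp
qed

lemma trace_char_add: "trace_char n (x + y) = trace_char n x * trace_char n (y::'a)"
  using tr_eq_0_or_1[of x] tr_eq_0_or_1[of y] by (auto simp: trace_char_def sgn2_def tr_add)

lemma sgn2_tr_add: "sgn2 (tr n x + tr n y) = trace_char n (x + y::'a)"
  by (simp add: trace_char_def tr_add)

lemma trace_char_cong: "tr n x = tr n y \<Longrightarrow> trace_char n x = trace_char n (y::'a)"
  by (simp add: trace_char_def)

end

locale self_dual_field = binary_field F n for F :: "'a::{field,finite} itself" and n +
  fixes \<alpha> :: "nat \<Rightarrow> 'a"
  assumes self_dual: "self_dual_basis n \<alpha>"
begin

lemma tr_basis_mult:
  "i < n \<Longrightarrow> j < n \<Longrightarrow> tr n (\<alpha> i * \<alpha> j) = (if i = j then 1 else 0)"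
  using self_dual by (simp add: self_dual_basis_def)

lemma sum_trace_char_mult:
  "(\<Sum>\<mu>\<in>UNIV. trace_char n (\<mu> * b)) = (if b = 0 then 2 ^ n else 0)" for b :: 'a
proof (cases "b = 0")
  case True
  then show ?thesis
    by (simp add: card_eq trace_char_def sgn2_def)
next
  case False
  define c where "c = \<alpha> 0 * \<alpha> 0 / b"
  have "trace_char n (c * b) = -1"
    using False tr_basis_mult[OF n_pos n_pos] by (simp add: c_def trace_char_def sgn2_def)
  have "(\<Sum>\<mu>\<in>UNIV. trace_char n (\<mu> * b)) = (\<Sum>\<mu>\<in>UNIV. trace_char n ((\<mu> + c) * b))"
    by (rule sum.reindex_bij_witness[of _ "\<lambda>\<mu>. \<mu> + c" "\<lambda>\<mu>. \<mu> + c"]) (auto simp: add.assoc)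
  also have "\<dots> = - (\<Sum>\<mu>\<in>UNIV. trace_char n (\<mu> * b))"
    using \<open>trace_char n (c * b) = -1\<close> by (simp add: distrib_right trace_char_add sum_negf)
  finally have "(\<Sum>\<mu>\<in>UNIV. trace_char n (\<mu> * b)) = - (\<Sum>\<mu>\<in>UNIV. trace_char n (\<mu> * b))" .
  then show ?thesis
    using False by simp
qed

lemma sum_trace_char_inversion:
  "(\<Sum>\<mu>\<in>UNIV. (\<Sum>a\<in>A. h a * trace_char n (\<mu> * a)) * trace_char n (\<mu> * b))
     = 2 ^ n * (if b \<in> A then h b else 0)" for b :: 'a
proof -
  have "(\<Sum>\<mu>\<in>UNIV. (\<Sum>a\<in>A. h a * trace_char n (\<mu> * a)) * trace_char n (\<mu> * b))
      = (\<Sum>\<mu>\<in>UNIV. \<Sum>a\<in>A. h a * trace_char n (\<mu> * (a + b)))"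
    by (simp add: sum_distrib_right distrib_left trace_char_add mult.assoc)
  also have "\<dots> = (\<Sum>a\<in>A. h a * (\<Sum>\<mu>\<in>UNIV. trace_char n (\<mu> * (a + b))))"
    by (simp add: sum_distrib_left sum.swap[of _ UNIV A])
  also have "\<dots> = (\<Sum>a\<in>A. if a = b then 2 ^ n * h b else 0)"
    by (intro sum.cong) (simp_all add: sum_trace_char_mult add_eq_0_iff_eq)
  finally show ?thesis
    by simp
qed

lemma sum_mult_cnj_sum:
  fixes f g :: "'a \<Rightarrow> complex" and d :: "'a \<Rightarrow> 'a"
  assumes autocorrelation: "\<And>a y. f (a + y) * cnj (f y) = g a * trace_char n (y * d a)"
  shows "(\<Sum>x\<in>UNIV. f x) * cnj (\<Sum>x\<in>UNIV. f x) = 2 ^ n * (\<Sum>a | d a = 0. g a)"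
proof -
  have "(\<Sum>x\<in>UNIV. f x) * cnj (\<Sum>x\<in>UNIV. f x) = (\<Sum>x\<in>UNIV. \<Sum>y\<in>UNIV. f x * cnj (f y))"
    by (simp add: sum_product)
  also have "\<dots> = (\<Sum>y\<in>UNIV. \<Sum>x\<in>UNIV. f x * cnj (f y))"
    by (rule sum.swap)
  also have "\<dots> = (\<Sum>y\<in>UNIV. \<Sum>a\<in>UNIV. f (a + y) * cnj (f y))"
  proof (rule sum.cong[OF refl])
    show "(\<Sum>x\<in>UNIV. f x * cnj (f y)) = (\<Sum>a\<in>UNIV. f (a + y) * cnj (f y))" for y
      by (rule sum.reindex_bij_witness[of _ "\<lambda>x. x + y" "\<lambda>a. a + y"]) (auto simp: add.assoc)
  qed
  also have "\<dots> = (\<Sum>a\<in>UNIV. \<Sum>y\<in>UNIV. g a * trace_char n (y * d a))"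
    unfolding autocorrelation by (rule sum.swap)
  also have "\<dots> = (\<Sum>a\<in>UNIV. g a * (\<Sum>y\<in>UNIV. trace_char n (y * d a)))"
    by (simp add: sum_distrib_left)
  also have "\<dots> = (\<Sum>a\<in>UNIV. if d a = 0 then 2 ^ n * g a else 0)"
    by (intro sum.cong) (simp_all add: sum_trace_char_mult)
  also have "\<dots> = 2 ^ n * (\<Sum>a | d a = 0. g a)"
    by (simp add: sum.If_cases sum_distrib_left)
  finally show ?thesis .
qed

definition coords :: "'a \<Rightarrow> nat set" where
  "coords x = {i. i < n \<and> tr n (\<alpha> i * x) \<noteq> 0}"

lemma wt_eq_card_coords: "wt n \<alpha> x = card (coords x)"
  by (simp add: wt_def coords_def)

lemma coords_subset: "coords x \<subseteq> {..<n}"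
  by (auto simp: coords_def)

lemma finite_coords [simp]: "finite (coords x)"
  using coords_subset finite_subset by blast

lemma coords_zero [simp]: "coords 0 = {}"
  by (simp add: coords_def)

lemma tr_basis_mult_sum:
  assumes "S \<subseteq> {..<n}" "i < n"
  shows "tr n (\<alpha> i * (\<Sum>j\<in>S. \<alpha> j)) = (if i \<in> S then 1 else 0)"
proof -
  have "tr n (\<alpha> i * (\<Sum>j\<in>S. \<alpha> j)) = (\<Sum>j\<in>S. if i = j then 1 else 0)"
    unfolding sum_distrib_left tr_sum using assms by (intro sum.cong) (auto simp: tr_basis_mult)
  also have "\<dots> = (if i \<in> S then 1 else 0)"
    using finite_subset[OF assms(1)] by simp
  finally show ?thesis .
qed

lemma coords_basis_sum:
  assumes "S \<subseteq> {..<n}"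
  shows "coords (\<Sum>j\<in>S. \<alpha> j) = S"
proof -
  have "i \<in> coords (\<Sum>j\<in>S. \<alpha> j) \<longleftrightarrow> i \<in> S" for i
    using tr_basis_mult_sum[OF assms, of i] assms by (cases "i < n") (auto simp: coords_def)
  then show ?thesis
    by blast
qed

(* Counting: distinct subsets of {..<n} have distinct basis sums, and there are as many subsets
   as field elements. *)
lemma basis_sum_coords: "(\<Sum>i\<in>coords x. \<alpha> i) = x"
proof -
  let ?E = "\<lambda>S. \<Sum>j\<in>S. \<alpha> j"
  have "inj_on ?E (Pow {..<n})"
    by (rule inj_onI) (metis PowD coords_basis_sum)
  then have "card (?E ` Pow {..<n}) = card (UNIV :: 'a set)"
    by (simp add: card_image card_Pow card_eq)
  then have "?E ` Pow {..<n} = UNIV"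
    by (metis card_subset_eq finite_UNIV subset_UNIV)
  then obtain S where "S \<subseteq> {..<n}" "x = ?E S"
    by (metis PowD UNIV_I imageE)
  then show ?thesis
    by (simp add: coords_basis_sum)
qed

lemma tr_mult_eq_card_coords: "tr n (x * y) = of_nat (card (coords x \<inter> coords y))"
proof -
  have "tr n (x * y) = (\<Sum>i\<in>coords x. tr n (\<alpha> i * y))"
    by (subst basis_sum_coords[of x, symmetric]) (simp add: sum_distrib_right tr_sum)
  also have "\<dots> = (\<Sum>i\<in>coords x. if i \<in> coords y then 1 else 0)"
    using coords_subset tr_eq_0_or_1 by (intro sum.cong) (auto simp: coords_def)
  also have "\<dots> = of_nat (card (coords x \<inter> coords y))"
    by (simp add: sum.If_cases Int_def)
  finally show ?thesis .
qed

lemma tr_eq_card_coords: "tr n x = of_nat (card (coords x))"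
  using tr_mult_eq_card_coords[of x x] tr_square[of x] by (simp add: power2_eq_square)

lemma coords_add: "coords (x + y) = coords x - coords y \<union> (coords y - coords x)"
proof -
  have "tr n (\<alpha> i * (x + y)) \<noteq> 0 \<longleftrightarrow> (tr n (\<alpha> i * x) \<noteq> 0) \<noteq> (tr n (\<alpha> i * y) \<noteq> 0)"
    for i
    using tr_eq_0_or_1[of "\<alpha> i * x"] tr_eq_0_or_1[of "\<alpha> i * y"]
    by (auto simp: distrib_left tr_add)
  then show ?thesis
    by (auto simp: coords_def)
qed

lemma i_power_wt_mult_cnj:
  "\<i> ^ wt n \<alpha> x * cnj (\<i> ^ wt n \<alpha> y) = \<i> ^ wt n \<alpha> (x + y) * trace_char n (x * y + y)"
proof -
  have "trace_char n (x * y + y) = trace_char n (x * y) * trace_char n y"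
    by (rule trace_char_add)
  also have "\<dots> = (-1) ^ (card (coords x \<inter> coords y) + card (coords y))"
    by (simp only: trace_char_def tr_mult_eq_card_coords tr_eq_card_coords[of y] sgn2_of_nat
        power_add)
  finally have "trace_char n (x * y + y) = (-1) ^ (card (coords x \<inter> coords y) + card (coords y))" .
  then show ?thesis
    unfolding wt_eq_card_coords coords_add by (simp only: i_power_card_mult_cnj finite_coords)
qed

lemma i_power_wt_shift:
  "\<i> ^ wt n \<alpha> (a + y) * cnj (\<i> ^ wt n \<alpha> y) = \<i> ^ wt n \<alpha> a * trace_char n (y * a)"
proof -
  have "tr n ((a + y) * y + y) = tr n (y * a)"
  proof -
    have "tr n (y * y) = tr n y"
      using tr_square[of y] by (simp add: power2_eq_square)
    moreover have "(a + y) * y + y = y * a + (y * y + y)"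
      by (simp add: algebra_simps)
    ultimately show ?thesis
      by (simp only: tr_add add_self add_0_right)
  qed
  then show ?thesis
    using i_power_wt_mult_cnj[of "a + y" y] by (simp add: add.assoc trace_char_def)
qed

end

locale even_self_dual_field = self_dual_field F n \<alpha> for F :: "'a::{field,finite} itself" and n \<alpha> +
  fixes k :: nat
  assumes n_eq: "n = 2 * k"
begin

lemma power_two_power_k_twice [simp]: "((x::'a) ^ 2 ^ k) ^ 2 ^ k = x"
  using power_two_power_n[of x] by (simp add: n_eq mult_2 power_add flip: power_mult)

lemma tr_eq_0_if_power_fixed:
  assumes "(z::'a) ^ 2 ^ k = z"
  shows "tr n z = 0"
proof -
  define f where "f i = z ^ 2 ^ i" for i
  have "tr n z = (\<Sum>i\<in>{0..<k}. f i) + (\<Sum>i\<in>{k..<k + k}. f i)"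
    unfolding tr_def n_eq mult_2 f_def atLeast0LessThan[symmetric]
    by (rule sum.atLeastLessThan_concat[symmetric]) simp_all
  also have "(\<Sum>i\<in>{k..<k + k}. f i) = (\<Sum>i\<in>{0..<k}. f i)"
  proof -
    have "f (i + k) = f i" for i
      using assms by (metis f_def mult.commute power_add power_mult)
    then show ?thesis
      using sum.shift_bounds_nat_ivl[of f 0 k k] by simp
  qed
  finally show ?thesis
    by simp
qed

lemma rel_tr_fixed: "(lam + lam ^ 2 ^ k) ^ 2 ^ k = lam + (lam::'a) ^ 2 ^ k"
  by (simp add: power_two_power_add add.commute)

lemma tr_quadratic_polar:
  "tr n (lam * (a + y) ^ (2 ^ k + 1))
     = tr n (lam * a ^ (2 ^ k + 1)) + tr n (lam * y ^ (2 ^ k + 1))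
       + tr n (y * ((lam + lam ^ 2 ^ k) * a ^ 2 ^ k))" for lam a y :: 'a
proof -
  have cross: "tr n (lam * a * y ^ 2 ^ k) = tr n (lam ^ 2 ^ k * a ^ 2 ^ k * y)"
    using tr_power_two[of "lam * a * y ^ 2 ^ k" k] by (simp add: power_mult_distrib)
  have "lam * (a + y) ^ (2 ^ k + 1)
      = lam * a ^ (2 ^ k + 1) + lam * y ^ (2 ^ k + 1) + lam * a * y ^ 2 ^ k + lam * a ^ 2 ^ k * y"
    by (simp add: power_two_power_add algebra_simps)
  moreover have "y * ((lam + lam ^ 2 ^ k) * a ^ 2 ^ k) = lam ^ 2 ^ k * a ^ 2 ^ k * y + lam * a ^ 2 ^ k * y"
    by (simp add: algebra_simps)
  ultimately show ?thesis
    by (simp only: tr_add cross add.assoc)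
qed

lemma trace_char_quadratic_shift:
  "trace_char n (lam * (a + y) ^ (2 ^ k + 1) + \<mu> * (a + y)) * trace_char n (lam * y ^ (2 ^ k + 1) + \<mu> * y)
     = trace_char n (lam * a ^ (2 ^ k + 1) + \<mu> * a) * trace_char n (y * ((lam + lam ^ 2 ^ k) * a ^ 2 ^ k))"
  for lam \<mu> a y :: 'a
proof -
  have "trace_char n (lam * (a + y) ^ (2 ^ k + 1))
      = trace_char n (lam * a ^ (2 ^ k + 1) + lam * y ^ (2 ^ k + 1)
                      + y * ((lam + lam ^ 2 ^ k) * a ^ 2 ^ k))"
    by (rule trace_char_cong) (simp only: tr_add tr_quadratic_polar)
  then show ?thesis
    by (simp only: trace_char_add distrib_left) (simp add: mult_ac)
qed

lemma walsh_quadratic_square: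
  "walsh n (\<lambda>x. tr n (lam * x ^ (2 ^ k + 1))) \<mu>
     * cnj (walsh n (\<lambda>x. tr n (lam * x ^ (2 ^ k + 1))) \<mu>)
   = 2 ^ n * (\<Sum>a | (lam + lam ^ 2 ^ k) * a ^ 2 ^ k = 0.
                trace_char n (lam * a ^ (2 ^ k + 1) + \<mu> * a))"
  for lam \<mu> :: 'a
  unfolding walsh_def sgn2_tr_add
  by (rule sum_mult_cnj_sum) (simp only: cnj_trace_char trace_char_quadratic_shift)

lemma nega_walsh_quadratic_shift:
  "trace_char n (lam * (a + y) ^ (2 ^ k + 1) + \<mu> * (a + y)) * \<i> ^ wt n \<alpha> (a + y)
     * cnj (trace_char n (lam * y ^ (2 ^ k + 1) + \<mu> * y) * \<i> ^ wt n \<alpha> y)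
   = trace_char n (lam * a ^ (2 ^ k + 1) + \<mu> * a) * \<i> ^ wt n \<alpha> a
     * trace_char n (y * ((lam + lam ^ 2 ^ k) * a ^ 2 ^ k + a))"
  for lam \<mu> a y :: 'a
proof -
  have "trace_char n (lam * (a + y) ^ (2 ^ k + 1) + \<mu> * (a + y)) * \<i> ^ wt n \<alpha> (a + y)
      * cnj (trace_char n (lam * y ^ (2 ^ k + 1) + \<mu> * y) * \<i> ^ wt n \<alpha> y)
      = (trace_char n (lam * (a + y) ^ (2 ^ k + 1) + \<mu> * (a + y))
          * trace_char n (lam * y ^ (2 ^ k + 1) + \<mu> * y))
        * (\<i> ^ wt n \<alpha> (a + y) * cnj (\<i> ^ wt n \<alpha> y))"
    by (simp only: complex_cnj_mult cnj_trace_char mult_ac)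
  also have "\<dots> = trace_char n (lam * a ^ (2 ^ k + 1) + \<mu> * a)
        * trace_char n (y * ((lam + lam ^ 2 ^ k) * a ^ 2 ^ k)) * (\<i> ^ wt n \<alpha> a * trace_char n (y * a))"
    by (simp only: trace_char_quadratic_shift i_power_wt_shift)
  also have "\<dots> = trace_char n (lam * a ^ (2 ^ k + 1) + \<mu> * a) * \<i> ^ wt n \<alpha> a
        * trace_char n (y * ((lam + lam ^ 2 ^ k) * a ^ 2 ^ k + a))"
    by (simp only: distrib_left[of y] trace_char_add mult_ac)
  finally show ?thesis .
qed

lemma nega_walsh_quadratic_square:
  "nega_walsh n \<alpha> (\<lambda>x. tr n (lam * x ^ (2 ^ k + 1))) \<mu>
     * cnj (nega_walsh n \<alpha> (\<lambda>x. tr n (lam * x ^ (2 ^ k + 1))) \<mu>)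
   = 2 ^ n * (\<Sum>a | (lam + lam ^ 2 ^ k) * a ^ 2 ^ k + a = 0.
                trace_char n (lam * a ^ (2 ^ k + 1) + \<mu> * a) * \<i> ^ wt n \<alpha> a)"
  for lam \<mu> :: 'a
  unfolding nega_walsh_def sgn2_tr_add
  by (rule sum_mult_cnj_sum) (rule nega_walsh_quadratic_shift)

lemma linearized_kernel:
  assumes "c ^ 2 ^ k = c" "c \<noteq> 1"
  shows "{a. c * a ^ 2 ^ k + a = 0} = {0::'a}"
proof -
  have "a = 0" if "c * a ^ 2 ^ k + a = 0" for a
  proof (rule ccontr)
    assume "a \<noteq> 0"
    have a_eq: "c * a ^ 2 ^ k = a"
      using that by (simp add: add_eq_0_iff_eq)
    then have "a ^ 2 ^ k = c * a"
      using assms(1) by (metis power_mult_distrib power_two_power_k_twice)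
    then have "(c * c - 1) * a = 0"
      using a_eq by (simp add: algebra_simps)
    then have "c * c = 1"
      using \<open>a \<noteq> 0\<close> by simp
    then have "(c + 1) ^ 2 ^ 1 = 0"
      by (simp only: power_two_power_add) (simp add: power2_eq_square)
    then show False
      using assms(2) by (simp add: add_eq_0_iff_eq)
  qed
  moreover have "c * 0 ^ 2 ^ k + 0 = (0::'a)"
    by (simp add: zero_power)
  ultimately show ?thesis
    by blast
qed

lemma negabent_quadratic_iff:
  "negabent n \<alpha> (\<lambda>x. tr n (lam * x ^ (2 ^ k + 1))) \<longleftrightarrow> lam + lam ^ 2 ^ k \<noteq> 1" for lam :: 'a
proof
  assume "lam + lam ^ 2 ^ k \<noteq> 1"
  then have kernel: "{a. (lam + lam ^ 2 ^ k) * a ^ 2 ^ k + a = 0} = {0}"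
    by (rule linearized_kernel[OF rel_tr_fixed])
  show "negabent n \<alpha> (\<lambda>x. tr n (lam * x ^ (2 ^ k + 1)))"
    unfolding negabent_iff_nega_walsh_square nega_walsh_quadratic_square kernel
    by (simp add: wt_eq_card_coords trace_char_def sgn2_def)
next
  assume negabent: "negabent n \<alpha> (\<lambda>x. tr n (lam * x ^ (2 ^ k + 1)))"
  show "lam + lam ^ 2 ^ k \<noteq> 1"
  proof
    assume "lam + lam ^ 2 ^ k = 1"
    define K where "K = {a::'a. a ^ 2 ^ k + a = 0}"
    define h where "h a = trace_char n (lam * a ^ (2 ^ k + 1)) * \<i> ^ wt n \<alpha> a" for a
    have "(\<Sum>a\<in>K. h a * trace_char n (\<mu> * a)) = 1" for \<mu>
    proof -
      have kernel: "{a. (lam + lam ^ 2 ^ k) * a ^ 2 ^ k + a = 0} = K"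
        unfolding \<open>lam + lam ^ 2 ^ k = 1\<close> K_def by simp
      have summand: "trace_char n (lam * a ^ (2 ^ k + 1) + \<mu> * a) * \<i> ^ wt n \<alpha> a
          = h a * trace_char n (\<mu> * a)" for a
        by (simp only: h_def trace_char_add mult_ac)
      have "nega_walsh n \<alpha> (\<lambda>x. tr n (lam * x ^ (2 ^ k + 1))) \<mu>
          * cnj (nega_walsh n \<alpha> (\<lambda>x. tr n (lam * x ^ (2 ^ k + 1))) \<mu>) = 2 ^ n"
        using negabent unfolding negabent_iff_nega_walsh_square by blast
      then have "2 ^ n * (\<Sum>a\<in>K. h a * trace_char n (\<mu> * a)) = (2 ^ n :: complex)"
        by (simp only: nega_walsh_quadratic_square kernel summand)
      then show ?thesis
        by simp
    qed
    \<comment> \<open>Fourier inversion at the root \<open>1 \<in> K\<close>: a flat spectrum would force \<open>h 1 = 0\<close>.\<close>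
    then have "(\<Sum>\<mu>\<in>UNIV. (\<Sum>a\<in>K. h a * trace_char n (\<mu> * a)) * trace_char n (\<mu> * 1)) = 0"
      by (simp only: mult_1_left sum_trace_char_mult) simp
    moreover have "1 \<in> K"
      by (simp add: K_def)
    ultimately have "h 1 = 0"
      using sum_trace_char_inversion[of h K 1] by simp
    then show False
      by (simp add: h_def trace_char_def sgn2_def split: if_splits)
  qed
qed

lemma bent_quadratic_iff:
  "bent n (\<lambda>x. tr n (lam * x ^ (2 ^ k + 1))) \<longleftrightarrow> lam + lam ^ 2 ^ k \<noteq> 0" for lam :: 'a
proof
  assume "lam + lam ^ 2 ^ k \<noteq> 0"
  then have kernel: "{a. (lam + lam ^ 2 ^ k) * a ^ 2 ^ k = 0} = {0}"
    by (auto simp: zero_power)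
  show "bent n (\<lambda>x. tr n (lam * x ^ (2 ^ k + 1)))"
    unfolding bent_iff_walsh_square walsh_quadratic_square kernel
    by (simp add: trace_char_def sgn2_def)
next
  assume bent: "bent n (\<lambda>x. tr n (lam * x ^ (2 ^ k + 1)))"
  show "lam + lam ^ 2 ^ k \<noteq> 0"
  proof
    assume "lam + lam ^ 2 ^ k = 0"
    then have lam_fixed: "lam ^ 2 ^ k = lam"
      by (simp add: add_eq_0_iff_eq)
    let ?f = "\<lambda>x. tr n (lam * x ^ (2 ^ k + 1))"
    have "?f x = 0" for x
    proof (rule tr_eq_0_if_power_fixed)
      have "(lam * x ^ (2 ^ k + 1)) ^ 2 ^ k = lam ^ 2 ^ k * ((x ^ 2 ^ k) ^ 2 ^ k * x ^ 2 ^ k)"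
        by (simp only: power_mult_distrib power_add power_one_right)
      also have "\<dots> = lam * x ^ (2 ^ k + 1)"
        by (simp only: lam_fixed power_two_power_k_twice power_add power_one_right mult.commute)
      finally show "(lam * x ^ (2 ^ k + 1)) ^ 2 ^ k = lam * x ^ (2 ^ k + 1)" .
    qed
    then have "walsh n ?f 0 = 2 ^ n"
      by (simp add: walsh_def sgn2_def card_eq)
    moreover have "walsh n ?f 0 * cnj (walsh n ?f 0) = 2 ^ n"
      using bent unfolding bent_iff_walsh_square by blast
    ultimately have "(2 ^ n :: complex) = 1"
      by simp
    then have "(2 :: nat) ^ n = 1"
      by (metis of_nat_eq_1_iff of_nat_numeral of_nat_power)
    then show False
      using n_pos by simp
  qed
qed

end

theorem proposition5:
  fixes lam :: "'a::{field,finite}" and \<alpha> :: "nat \<Rightarrow> 'a" and n k :: nat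
  assumes "card (UNIV :: 'a set) = 2 ^ n" and "n = 2 * k" and "k \<ge> 1"
    and "self_dual_basis n \<alpha>"
  shows "(negabent n \<alpha> (\<lambda>x. tr n (lam * x ^ (2 ^ k + 1))) \<longleftrightarrow> lam + lam ^ (2 ^ k) \<noteq> 1)
       \<and> ((bent n (\<lambda>x. tr n (lam * x ^ (2 ^ k + 1))) \<and> negabent n \<alpha> (\<lambda>x. tr n (lam * x ^ (2 ^ k + 1))))
            \<longleftrightarrow> lam + lam ^ (2 ^ k) \<notin> {0, 1})"
proof -
  interpret even_self_dual_field "TYPE('a)" n \<alpha> k
    using assms by unfold_locales
  show ?thesis
    using negabent_quadratic_iff[of lam] bent_quadratic_iff[of lam] by blast
qed

end
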